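(* Let $N$ be a positive even integer, $\alpha>0$, and let $\Phi:[0,1]^2\times(\mathbb{R}^2\setminus\{0\})\to\mathbb{R}$ be measurable in $x$, $C^3$ in $\xi$, and homogeneous of degree one in $\xi$ (i.e. $\Phi(x,\lambda\xi)=\lambda\Phi(x,\xi)$ for all $\lambda>0$). Define, with $\theta=\arg\xi$, $$C_k=2\pi\sup_{x\in[0,1]^2}\sup_{|\xi|=1}|\partial_\theta^k\Phi(x,\xi)|\quad(0\le k\le 3),\qquad D_2=C_0+C_2,\quad D_3=C_1+C_3,$$ assumed finite. Let $\hat\xi_\ell$ be a unit vector, and let $W_\ell$ be the set of $\xi$ in the square $[-\frac N2,\frac N2-1]^2$ whose angle with $\hat\xi_\ell$ is at most $\frac{\alpha}{\sqrt N}$ (a wedge of angular opening $\frac{2\alpha}{\sqrt N}$ centered on $\hat\xi_\ell$). Define the residual phase $\Phi_\ell(x,\xi)=\Phi(x,\xi)-\nabla_\xi\Phi(x,\hat\xi_\ell)\cdot\xi$. Then for all $0<\epsilon\le1$ and all $N\ge\frac{\alpha^6D_3^2}{18\epsilon^2}$, the $\epsilon$-separation rank $r_\epsilon$ of $e^{2\pi i\Phi_\ell(x,\xi)}$ for $x\in[0,1]^2$, $\xi\in W_\ell$ obeys $$r_\epsilon\le 1+\max\Big\{\frac{e\sqrt2}{2}\alpha^2D_2,\ \log_2(4\epsilon^{-1})\Big\}.$$ Furthermore, if in addition $\alpha\le\sqrt{\frac{\sqrt2}{eD_2}}$, then $$r_\epsilon\le 1+\frac{\log(4\epsilon^{-1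})}{\log\frac{2\sqrt2}{e\alpha^2D_2}}.$$
   Context: For a function $f(x,\xi)$ on a product domain $D_1\times D_2$ and $\epsilon>0$, the $\epsilon$-separation rank is the smallest integer $r_\epsilon$ for which there exist functions $c_n$ on $D_1$ and $d_n$ on $D_2$ ($0\le n\le r_\epsilon-1$) with $|f(x,\xi)-\sum_{n=0}^{r_\epsilon-1}c_n(x)d_n(\xi)|\le\epsilon$ for all $(x,\xi)\in D_1\times D_2$. $\log$ denotes the natural logarithm. *)

theory Defs
  imports "HOL-Analysis.Analysis"
begin

text \<open>k-times continuously differentiable real-valued functions on a set S
  (intended for open S): iterated Frechet derivatives, applied to arbitrary
  direction vectors, exist and are continuous.\<close>
fun Ck_on :: "nat \<Rightarrow> 'a::real_normed_vector set \<Rightarrow> ('a \<Rightarrow> real) \<Rightarrow> bool" where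
  "Ck_on 0 S f = continuous_on S f"
| "Ck_on (Suc k) S f =
     ((\<forall>y\<in>S. f differentiable (at y)) \<and>
      (\<forall>v. Ck_on k S (\<lambda>y. frechet_derivative f (at y) v)))"

definition dirvec :: "real \<Rightarrow> real^2" where
  "dirvec t = vector [cos t, sin t]"

definition Cconst :: "(real^2 \<Rightarrow> real^2 \<Rightarrow> real) \<Rightarrow> nat \<Rightarrow> real" where
  "Cconst Phi k = 2 * pi *
     (SUP p \<in> cbox (0::real^2) 1 \<times> (UNIV::real set).
        \<bar>(deriv ^^ k) (\<lambda>t. Phi (fst p) (dirvec t)) (snd p)\<bar>)"

definition sep_rank :: "real \<Rightarrow> ('a \<Rightarrow> 'b \<Rightarrow> complex) \<Rightarrow> 'a set \<Rightarrow> 'b set \<Rightarrow> nat" where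
  "sep_rank eps f D1 D2 = (LEAST r. \<exists>(c::nat \<Rightarrow> 'a \<Rightarrow> complex) (d::nat \<Rightarrow> 'b \<Rightarrow> complex).
       \<forall>x\<in>D1. \<forall>\<xi>\<in>D2. cmod (f x \<xi> - (\<Sum>n<r. c n x * d n \<xi>)) \<le> eps)"

definition wedge :: "nat \<Rightarrow> real \<Rightarrow> real^2 \<Rightarrow> (real^2) set" where
  "wedge N alpha u = {\<xi>. \<xi> \<in> cbox (\<chi> i. - real N / 2) (\<chi> i. real N / 2 - 1) \<and> \<xi> \<noteq> 0 \<and>
       arccos ((\<xi> \<bullet> u) / norm \<xi>) \<le> alpha / sqrt (real N)}"

definition resid_phase :: "(real^2 \<Rightarrow> real^2 \<Rightarrow> real) \<Rightarrow> real^2 \<Rightarrow> real^2 \<Rightarrow> real^2 \<Rightarrow> real" where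
  "resid_phase Phi u x \<xi> = Phi x \<xi> - frechet_derivative (Phi x) (at u) \<xi>"

end

theory Submission
  imports Defs "HOL-Probability.Characteristic_Functions"
begin

text \<open>
  Write \<open>u = dirvec \<theta>\<close>, \<open>\<xi> = \<rho> dirvec (\<theta> + \<phi>)\<close> and \<open>h t = \<Phi> x (dirvec t)\<close>. By homogeneity
  (and Euler's identity for the gradient at \<open>u\<close>) the residual phase is
  \<open>\<rho> (h (\<theta> + \<phi>) - h \<theta> cos \<phi> - h' \<theta> sin \<phi>)\<close>. Variation of constants for the operator
  \<open>h'' + h\<close> turns this into \<open>\<rho> (1 - cos \<phi>) (h + h'') \<theta>\<close> up to an error
  \<open>\<rho> sup \<bar>h' + h'''\<bar> (\<bar>\<phi>\<bar> - sin \<bar>\<phi>\<bar>)\<close>. In the wedge \<open>\<rho> \<le> N / sqrt 2\<close> and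
  \<open>\<bar>\<phi>\<bar> \<le> \<alpha> / sqrt N\<close>, so for the stated \<open>N\<close> the phase \<open>2 pi \<Phi>\<^sub>l\<close> differs by at most
  \<open>\<epsilon> / 2\<close> from a product \<open>A x * B \<xi>\<close> bounded by \<open>M = \<alpha>\<^sup>2 D\<^sub>2 / (2 sqrt 2)\<close>. Truncating the
  exponential series of \<open>cis (A x * B \<xi>)\<close> after \<open>r\<close> terms is a separated expansion of rank
  \<open>r\<close> with error \<open>M\<^sup>r / r!\<close>; the two rank bounds come from \<open>r! \<ge> (r / e)\<^sup>r\<close> and \<open>r! \<ge> 1\<close>.
\<close>

section \<open>The unit circle\<close>

definition dirvec_perp :: "real \<Rightarrow> real^2" where
  "dirvec_perp t = vector [- sin t, cos t]"

lemma dirvec_eq_axis: "dirvec t = cos t *\<^sub>R axis 1 1 + sin t *\<^sub>R axis 2 1"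
  by (simp add: dirvec_def vec_eq_iff forall_2 axis_def)

lemma dirvec_perp_eq_axis: "dirvec_perp t = (- sin t) *\<^sub>R axis 1 1 + cos t *\<^sub>R axis 2 1"
  by (simp add: dirvec_perp_def vec_eq_iff forall_2 axis_def)

lemma norm_dirvec [simp]: "norm (dirvec t) = 1"
  by (simp add: norm_vec_def L2_set_def UNIV_2 dirvec_def)

lemma dirvec_nonzero [simp]: "dirvec t \<noteq> 0"
  using norm_dirvec[of t] by (metis norm_zero zero_neq_one)

lemma dirvec_add: "dirvec (a + \<phi>) = cos \<phi> *\<^sub>R dirvec a + sin \<phi> *\<^sub>R dirvec_perp a"
  by (simp add: dirvec_def dirvec_perp_def vec_eq_iff forall_2 cos_add sin_add algebra_simps)

lemma unit_vector_eq_dirvec_add: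
  fixes v :: "real^2"
  assumes "norm v = 1"
  obtains \<phi> where "\<bar>\<phi>\<bar> \<le> pi" "cos \<phi> = v \<bullet> dirvec a" "v = dirvec (a + \<phi>)"
proof -
  define c w where "c = v \<bullet> dirvec a" and "w = v \<bullet> dirvec_perp a"
  have c: "c = v$1 * cos a + v$2 * sin a" and w: "w = - v$1 * sin a + v$2 * cos a"
    by (simp_all add: c_def w_def inner_vec_def UNIV_2 dirvec_def dirvec_perp_def)
  have "(v$1)^2 + (v$2)^2 = 1"
    using assms by (simp add: norm_vec_def L2_set_def UNIV_2)
  moreover have "c^2 + w^2 = ((v$1)^2 + (v$2)^2) * ((sin a)^2 + (cos a)^2)"
    unfolding c w by algebra
  ultimately have "c^2 + \<bar>w\<bar>^2 = 1"
    by simp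
  then obtain t where t: "0 \<le> t" "t \<le> pi" "c = cos t" "\<bar>w\<bar> = sin t"
    using sincos_total_pi by (metis abs_ge_zero)
  define \<phi> where "\<phi> = (if w \<ge> 0 then t else - t)"
  have "\<bar>\<phi>\<bar> \<le> pi" "cos \<phi> = c" "sin \<phi> = w"
    using t by (auto simp: \<phi>_def)
  moreover have "v = c *\<^sub>R dirvec a + w *\<^sub>R dirvec_perp a"
  proof -
    have "c * cos a - w * sin a = v$1 * ((sin a)^2 + (cos a)^2)"
      and "c * sin a + w * cos a = v$2 * ((sin a)^2 + (cos a)^2)"
      unfolding c w by algebra+
    then have "v$1 = c * cos a - w * sin a" "v$2 = c * sin a + w * cos a"
      by simp_all
    then show ?thesis
      by (simp add: vec_eq_iff forall_2 dirvec_def dirvec_perp_def)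
  qed
  ultimately show ?thesis
    using that c_def dirvec_add by metis
qed

lemma has_derivative_dirvec: "(dirvec has_derivative (\<lambda>s. s *\<^sub>R dirvec_perp t)) (at t)"
  unfolding dirvec_eq_axis[abs_def] dirvec_perp_eq_axis
  by (auto intro!: derivative_eq_intros simp: algebra_simps)

lemma has_real_derivative_comp_dirvec:
  fixes f :: "real^2 \<Rightarrow> real"
  assumes "f differentiable (at (dirvec t))"
  shows "((\<lambda>t. f (dirvec t)) has_real_derivative
           frechet_derivative f (at (dirvec t)) (dirvec_perp t)) (at t)"
proof -
  let ?L = "frechet_derivative f (at (dirvec t))"
  have f': "(f has_derivative ?L) (at (dirvec t))"
    using assms frechet_derivative_works by blast
  then have "linear ?L"
    using has_derivative_bounded_linear bounded_linear.linear by blast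
  then have "?L \<circ> (\<lambda>s. s *\<^sub>R dirvec_perp t) = (*) (?L (dirvec_perp t))"
    by (auto simp: fun_eq_iff linear_scale)
  then show ?thesis
    using diff_chain_at[OF has_derivative_dirvec f'] by (simp add: has_field_derivative_def o_def)
qed

lemma has_real_derivative_comp_dirvec_axis:
  fixes f :: "real^2 \<Rightarrow> real"
  assumes "f differentiable (at (dirvec t))"
  shows "((\<lambda>t. f (dirvec t)) has_real_derivative
           - sin t * frechet_derivative f (at (dirvec t)) (axis 1 1)
           + cos t * frechet_derivative f (at (dirvec t)) (axis 2 1)) (at t)"
proof -
  have "linear (frechet_derivative f (at (dirvec t)))"
    using assms frechet_derivative_works has_derivative_bounded_linear bounded_linear.linear by blast
  then show ?thesis
    using has_real_derivative_comp_dirvec[OF assms]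
    by (simp add: dirvec_perp_eq_axis linear_diff linear_scale)
qed

lemma angular_derivatives:
  fixes f :: "real^2 \<Rightarrow> real"
  assumes "Ck_on 3 (- {0}) f"
  defines "h \<equiv> \<lambda>t. f (dirvec t)"
  shows "(h has_real_derivative deriv h t) (at t)"
    and "(deriv h has_real_derivative deriv (deriv h) t) (at t)"
    and "(deriv (deriv h) has_real_derivative deriv (deriv (deriv h)) t) (at t)"
proof -
  define Dp where "Dp v g = (\<lambda>y. frechet_derivative g (at y) v)" for v and g :: "real^2 \<Rightarrow> real"
  define e1 e2 :: "real^2" where "e1 = axis 1 1" and "e2 = axis 2 1"
  have circ: "((\<lambda>t. g (dirvec t)) has_real_derivative
                 - sin t * Dp e1 g (dirvec t) + cos t * Dp e2 g (dirvec t)) (at t)"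
    if "\<And>y. y \<noteq> 0 \<Longrightarrow> g differentiable (at y)" for g t
    using has_real_derivative_comp_dirvec_axis[of g t] that unfolding Dp_def e1_def e2_def by simp
  have f: "f differentiable (at y)" and f1: "Dp v f differentiable (at y)"
    and f2: "Dp w (Dp v f) differentiable (at y)" if "y \<noteq> 0" for v w y
    using assms(1) that by (simp_all add: numeral_3_eq_3 Dp_def)
  define g1 where "g1 v t = Dp v f (dirvec t)" for v t
  define G1 where "G1 v t = - sin t * Dp e1 (Dp v f) (dirvec t) + cos t * Dp e2 (Dp v f) (dirvec t)" for v t
  define H1 where "H1 t = - sin t * g1 e1 t + cos t * g1 e2 t" for t
  define H2 where "H2 t = - cos t * g1 e1 t - sin t * G1 e1 t - sin t * g1 e2 t + cos t * G1 e2 t" for t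
  have h': "(h has_real_derivative H1 t) (at t)" for t
    unfolding h_def H1_def g1_def by (rule circ[OF f])
  have g1': "(g1 v has_real_derivative G1 v t) (at t)" for v t
    unfolding g1_def G1_def by (rule circ[OF f1])
  have G1_diff: "G1 v differentiable (at t)" for v t
    unfolding G1_def
    by (intro derivative_intros differentiableI[OF circ[OF f2, unfolded has_field_derivative_def]]
        differentiableI[OF DERIV_sin[unfolded has_field_derivative_def]]
        differentiableI[OF DERIV_cos[unfolded has_field_derivative_def]])
  have H1': "(H1 has_real_derivative H2 t) (at t)" for t
    unfolding H1_def H2_def by (rule derivative_eq_intros g1' refl | simp)+
  have H2_diff: "H2 differentiable (at t)" for t
    unfolding H2_def
    by (intro derivative_intros G1_diff differentiableI[OF g1'[unfolded has_field_derivative_def]]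
        differentiableI[OF DERIV_sin[unfolded has_field_derivative_def]]
        differentiableI[OF DERIV_cos[unfolded has_field_derivative_def]])
  have "deriv h = H1" "deriv H1 = H2"
    using h' H1' DERIV_imp_deriv by blast+
  then show "(h has_real_derivative deriv h t) (at t)"
    and "(deriv h has_real_derivative deriv (deriv h) t) (at t)"
    and "(deriv (deriv h) has_real_derivative deriv (deriv (deriv h)) t) (at t)"
    using h' H1' H2_diff by (simp_all add: DERIV_deriv_iff_real_differentiable)
qed

section \<open>A Taylor estimate on the circle\<close>

lemma abs_diff_le_if_dominated_derivative:
  fixes g p g' p' :: "real \<Rightarrow> real"
  assumes "a \<le> b"
    and g': "\<And>s. (g has_real_derivative g' s) (at s)"
    and p': "\<And>s. (p has_real_derivative p' s) (at s)"
    and dom: "\<And>s. a \<le> s \<Longrightarrow> s \<le> b \<Longrightarrow> \<bar>g' s\<bar> \<le> p' s"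
  shows "\<bar>g b - g a\<bar> \<le> p b - p a"
proof -
  have "0 \<le> p' s - g' s" "0 \<le> p' s + g' s" if "a \<le> s" "s \<le> b" for s
    using dom[OF that] by linarith+
  moreover have "((\<lambda>s. p s - g s) has_real_derivative p' s - g' s) (at s)"
    and "((\<lambda>s. p s + g s) has_real_derivative p' s + g' s) (at s)" for s
    by (auto intro!: derivative_intros g' p')
  ultimately have "p a - g a \<le> p b - g b" "p a + g a \<le> p b + g b"
    using DERIV_nonneg_imp_nondecreasing[OF \<open>a \<le> b\<close>, of "\<lambda>s. p s - g s"]
      DERIV_nonneg_imp_nondecreasing[OF \<open>a \<le> b\<close>, of "\<lambda>s. p s + g s"] by blast+
  then show ?thesis
    by linarith
qed

lemma circle_taylor_nonneg:
  fixes h h1 h2 h3 :: "real \<Rightarrow> real"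
  assumes h1: "\<And>t. (h has_real_derivative h1 t) (at t)"
    and h2: "\<And>t. (h1 has_real_derivative h2 t) (at t)"
    and h3: "\<And>t. (h2 has_real_derivative h3 t) (at t)"
    and K: "\<And>t. \<bar>h1 t + h3 t\<bar> \<le> K"
    and "0 \<le> d" "d \<le> pi"
  shows "\<bar>h (a + d) - h a * cos d - h1 a * sin d - (h a + h2 a) * (1 - cos d)\<bar> \<le> K * (d - sin d)"
proof -
  define q where "q s = h s + h2 s" for s
  have q_lipschitz: "\<bar>q s - q a\<bar> \<le> K * s - K * a" if "a \<le> s" for s
    unfolding q_def
    by (rule abs_diff_le_if_dominated_derivative[OF that, where p' = "\<lambda>_. K"])
       (auto intro!: derivative_eq_intros h1 h3 K)
  define r where "r s = h s - h a * cos (s - a) - h1 a * sin (s - a) - q a * (1 - cos (s - a))" for s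
  define r1 where "r1 s = h1 s - h1 a * cos (s - a) - h2 a * sin (s - a)" for s
  define r2 where "r2 s = h2 s + h1 a * sin (s - a) - h2 a * cos (s - a)" for s
  have r1: "(r has_real_derivative r1 s) (at s)" for s
    unfolding r_def r1_def q_def by (auto intro!: derivative_eq_intros h1 simp: algebra_simps)
  have r2: "(r1 has_real_derivative r2 s) (at s)" for s
    unfolding r1_def r2_def by (auto intro!: derivative_eq_intros h2 simp: algebra_simps)
  have r_ode: "r s + r2 s = q s - q a" for s
    unfolding r_def r2_def q_def by (simp add: algebra_simps)
  define b where "b = a + d"
  \<comment> \<open>Variation of constants for \<open>r'' + r = q - q a\<close>: the derivative of \<open>G\<close> is
    \<open>(q s - q a) sin (b - s)\<close>.\<close>
  define G where "G s = r1 s * sin (b - s) + r s * cos (b - s)" for s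
  define P where "P s = K * ((s - a) * cos (b - s) + sin (b - s))" for s
  have G': "(G has_real_derivative (q s - q a) * sin (b - s)) (at s)" for s
    unfolding G_def
    apply (rule derivative_eq_intros r1 r2 refl | simp)+
    using r_ode[of s] by (simp add: algebra_simps) (metis distrib_right)
  have P': "(P has_real_derivative K * (s - a) * sin (b - s)) (at s)" for s
    unfolding P_def by (auto intro!: derivative_eq_intros simp: algebra_simps)
  have "\<bar>(q s - q a) * sin (b - s)\<bar> \<le> K * (s - a) * sin (b - s)" if "a \<le> s" "s \<le> b" for s
  proof -
    have "0 \<le> sin (b - s)"
      using that \<open>d \<le> pi\<close> b_def by (intro sin_ge_zero) auto
    then show ?thesis
      using q_lipschitz[OF that(1)] by (simp add: abs_mult mult_right_mono right_diff_distrib)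
  qed
  then have "\<bar>G b - G a\<bar> \<le> P b - P a"
    using \<open>0 \<le> d\<close> b_def by (intro abs_diff_le_if_dominated_derivative[OF _ G' P']) auto
  then show ?thesis
    by (simp add: G_def P_def r_def r1_def q_def b_def right_diff_distrib)
qed

lemma circle_taylor:
  fixes h h1 h2 h3 :: "real \<Rightarrow> real"
  assumes h1: "\<And>t. (h has_real_derivative h1 t) (at t)"
    and h2: "\<And>t. (h1 has_real_derivative h2 t) (at t)"
    and h3: "\<And>t. (h2 has_real_derivative h3 t) (at t)"
    and K: "\<And>t. \<bar>h1 t + h3 t\<bar> \<le> K"
    and "\<bar>\<phi>\<bar> \<le> pi"
  shows "\<bar>h (a + \<phi>) - h a * cos \<phi> - h1 a * sin \<phi> - (h a + h2 a) * (1 - cos \<phi>)\<bar>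
           \<le> K * (\<bar>\<phi>\<bar> - sin \<bar>\<phi>\<bar>)"
proof (cases "\<phi> \<ge> 0")
  case True
  then show ?thesis
    using circle_taylor_nonneg[OF h1 h2 h3 K, of \<phi> a] \<open>\<bar>\<phi>\<bar> \<le> pi\<close> by simp
next
  case False
  have "((\<lambda>t. h (- t)) has_real_derivative - h1 (- t)) (at t)"
    and "((\<lambda>t. - h1 (- t)) has_real_derivative h2 (- t)) (at t)"
    and "((\<lambda>t. h2 (- t)) has_real_derivative - h3 (- t)) (at t)" for t
    using DERIV_chain2[OF h1 DERIV_minus[OF DERIV_ident]] DERIV_chain2[OF h3 DERIV_minus[OF DERIV_ident]]
      DERIV_minus[OF DERIV_chain2[OF h2 DERIV_minus[OF DERIV_ident]]] by simp_all
  moreover have "\<bar>- h1 (- t) + - h3 (- t)\<bar> \<le> K" for t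
    using K[of "- t"] by simp
  ultimately have "\<bar>h (- (- a + - \<phi>)) - h (- (- a)) * cos (- \<phi>) - - h1 (- (- a)) * sin (- \<phi>)
      - (h (- (- a)) + h2 (- (- a))) * (1 - cos (- \<phi>))\<bar> \<le> K * (- \<phi> - sin (- \<phi>))"
    using circle_taylor_nonneg[of "\<lambda>t. h (- t)" "\<lambda>t. - h1 (- t)" "\<lambda>t. h2 (- t)" "\<lambda>t. - h3 (- t)"
        K "- \<phi>" "- a"] False \<open>\<bar>\<phi>\<bar> \<le> pi\<close> by simp
  then show ?thesis
    using False by (simp add: add.commute)
qed

section \<open>Truncated exponential series and separation rank\<close>

lemma norm_cis_diff_le: "cmod (cis a - cis b) \<le> \<bar>a - b\<bar>"
proof -
  have "cis a - cis b = cis b * (cis (a - b) - 1)"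
    by (simp add: algebra_simps cis_mult)
  then have "cmod (cis a - cis b) = cmod (cis (a - b) - 1)"
    by (simp add: norm_mult)
  also have "\<dots> \<le> \<bar>a - b\<bar>"
    using iexp_approx1[of "a - b" 0] by (simp add: cis_conv_exp)
  finally show ?thesis .
qed

lemma norm_cis_minus_taylor_le:
  assumes "r \<ge> 1"
  shows "cmod (cis z - (\<Sum>k<r. (\<i> * complex_of_real z)^k / fact k)) \<le> \<bar>z\<bar>^r / fact r"
proof -
  obtain n where "r = Suc n"
    using assms by (cases r) auto
  moreover have "{..<Suc n} = {..n}"
    by auto
  ultimately show ?thesis
    using iexp_approx1[of z n] by (simp add: cis_conv_exp)
qed

lemma one_minus_cos_le: "1 - cos (d::real) \<le> d^2 / 2"
proof -
  have "\<bar>Re (iexp d - (\<Sum>k\<le>1. (\<i> * d)^k / fact k))\<bar> \<le> \<bar>d\<bar>^2 / 2"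
    using order_trans[OF abs_Re_le_cmod iexp_approx1[of d 1]] by (simp add: eval_nat_numeral)
  then show ?thesis
    by (simp add: cis_conv_exp[symmetric])
qed

lemma diff_sin_le: "(d::real) - sin d \<le> \<bar>d\<bar>^3 / 6"
proof -
  have "\<bar>Im (iexp d - (\<Sum>k\<le>2. (\<i> * d)^k / fact k))\<bar> \<le> \<bar>d\<bar>^3 / 6"
    using order_trans[OF abs_Im_le_cmod iexp_approx1[of d 2]] by (simp add: eval_nat_numeral)
  then have "\<bar>sin d - d\<bar> \<le> \<bar>d\<bar>^3 / 6"
    by (simp add: cis_conv_exp[symmetric] eval_nat_numeral)
  then show ?thesis
    by linarith
qed

lemma sep_rank_le:
  assumes "\<And>x \<xi>. x \<in> D1 \<Longrightarrow> \<xi> \<in> D2 \<Longrightarrow> cmod (f x \<xi> - (\<Sum>n<r. c n x * d n \<xi>)) \<le> eps"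
  shows "sep_rank eps f D1 D2 \<le> r"
  unfolding sep_rank_def by (rule Least_le) (use assms in blast)

lemma sep_rank_cis_le_if_product_approx:
  fixes g :: "'a \<Rightarrow> 'b \<Rightarrow> real" and a :: "'a \<Rightarrow> real" and b :: "'b \<Rightarrow> real"
  assumes "r \<ge> 1" "M^r / fact r \<le> \<epsilon> / 2"
    and approx: "\<And>x \<xi>. x \<in> D1 \<Longrightarrow> \<xi> \<in> D2 \<Longrightarrow> \<bar>g x \<xi> - a x * b \<xi>\<bar> \<le> \<epsilon> / 2"
    and bound: "\<And>x \<xi>. x \<in> D1 \<Longrightarrow> \<xi> \<in> D2 \<Longrightarrow> \<bar>a x * b \<xi>\<bar> \<le> M"
  shows "sep_rank \<epsilon> (\<lambda>x \<xi>. cis (g x \<xi>)) D1 D2 \<le> r"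
proof (rule sep_rank_le)
  fix x \<xi> assume "x \<in> D1" "\<xi> \<in> D2"
  \<comment> \<open>The factors are \<open>c n x = (\<i> a x)\<^sup>n / n!\<close> and \<open>d n \<xi> = b \<xi>\<^sup>n\<close>: the exponential series
    of \<open>cis (a x * b \<xi>)\<close> truncated after \<open>r\<close> terms.\<close>
  define z where "z = a x * b \<xi>"
  have "(\<Sum>n<r. (\<i> * a x)^n / fact n * b \<xi>^n) = (\<Sum>n<r. (\<i> * complex_of_real z)^n / fact n)"
    by (simp add: z_def power_mult_distrib mult.assoc)
  moreover have "cmod (cis (g x \<xi>) - cis z) \<le> \<epsilon> / 2"
    using norm_cis_diff_le approx[OF \<open>x \<in> D1\<close> \<open>\<xi> \<in> D2\<close>] unfolding z_def by (rule order_trans)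
  moreover have "cmod (cis z - (\<Sum>n<r. (\<i> * complex_of_real z)^n / fact n)) \<le> \<epsilon> / 2"
  proof -
    have "\<bar>z\<bar>^r / fact r \<le> M^r / fact r"
      using bound[OF \<open>x \<in> D1\<close> \<open>\<xi> \<in> D2\<close>] unfolding z_def by (intro divide_right_mono power_mono) auto
    then show ?thesis
      using norm_cis_minus_taylor_le[OF \<open>r \<ge> 1\<close>, of z] \<open>M^r / fact r \<le> \<epsilon> / 2\<close> by linarith
  qed
  ultimately show "cmod (cis (g x \<xi>) - (\<Sum>n<r. (\<i> * a x)^n / fact n * b \<xi>^n)) \<le> \<epsilon>"
    using norm_triangle_le_diff[of "cis (g x \<xi>)" "cis z"] norm_diff_triangle_le by fastforce
qed

section \<open>The residual phase of a homogeneous phase function\<close>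

lemma frechet_derivative_self_if_homogeneous:
  fixes f :: "'a::real_normed_vector \<Rightarrow> real"
  assumes homog: "\<And>y c. y \<noteq> 0 \<Longrightarrow> c > 0 \<Longrightarrow> f (c *\<^sub>R y) = c * f y"
    and "f differentiable (at u)" and "u \<noteq> 0"
  shows "frechet_derivative f (at u) u = f u"
proof -
  let ?L = "frechet_derivative f (at u)"
  have f': "(f has_derivative ?L) (at u)"
    using assms(2) frechet_derivative_works by blast
  then have "linear ?L"
    using has_derivative_bounded_linear bounded_linear.linear by blast
  then have "?L \<circ> (\<lambda>s. s *\<^sub>R u) = (*) (?L u)"
    by (auto simp: fun_eq_iff linear_scale)
  moreover have "((\<lambda>c::real. c *\<^sub>R u) has_derivative (\<lambda>s. s *\<^sub>R u)) (at 1)"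
    by (auto intro!: derivative_eq_intros)
  then have "((f \<circ> (\<lambda>c. c *\<^sub>R u)) has_derivative (?L \<circ> (\<lambda>s. s *\<^sub>R u))) (at 1)"
    by (rule diff_chain_at) (simp add: f')
  ultimately have "((\<lambda>c. f (c *\<^sub>R u)) has_real_derivative ?L u) (at 1)"
    by (simp add: has_field_derivative_def o_def)
  moreover have "((\<lambda>c. f (c *\<^sub>R u)) has_real_derivative f u) (at 1)"
    by (rule has_field_derivative_transform_within_open[of "\<lambda>c. c * f u" _ _ "{0<..}"])
       (auto intro!: derivative_eq_intros simp: homog \<open>u \<noteq> 0\<close>)
  ultimately show ?thesis
    using DERIV_unique by blast
qed

lemma linearization_remainder_homogeneous:
  fixes f :: "real^2 \<Rightarrow> real"
  defines "h \<equiv> \<lambda>t. f (dirvec t)"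
  assumes smooth: "Ck_on 3 (- {0}) f"
    and homog: "\<And>y c. y \<noteq> 0 \<Longrightarrow> c > 0 \<Longrightarrow> f (c *\<^sub>R y) = c * f y"
    and K: "\<And>t. \<bar>deriv h t + deriv (deriv (deriv h)) t\<bar> \<le> K"
    and "\<rho> > 0" "\<bar>\<phi>\<bar> \<le> pi"
  shows "\<bar>f (\<rho> *\<^sub>R dirvec (a + \<phi>)) - frechet_derivative f (at (dirvec a)) (\<rho> *\<^sub>R dirvec (a + \<phi>))
           - \<rho> * (1 - cos \<phi>) * (h a + deriv (deriv h) a)\<bar> \<le> \<rho> * K * \<bar>\<phi>\<bar>^3 / 6"
proof -
  let ?L = "frechet_derivative f (at (dirvec a))"
  have f_diff: "f differentiable (at (dirvec a))"
    using smooth by (simp add: numeral_3_eq_3)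
  then have "linear ?L"
    using frechet_derivative_works has_derivative_bounded_linear bounded_linear.linear by blast
  moreover have "?L (dirvec a) = h a"
    using frechet_derivative_self_if_homogeneous[OF homog f_diff] by (simp add: h_def)
  moreover have "?L (dirvec_perp a) = deriv h a"
    using has_real_derivative_comp_dirvec[OF f_diff] unfolding h_def by (rule DERIV_imp_deriv[symmetric])
  ultimately have L: "?L (\<rho> *\<^sub>R dirvec (a + \<phi>)) = \<rho> * (h a * cos \<phi> + deriv h a * sin \<phi>)"
    by (simp add: dirvec_add linear_add linear_scale)
  have f: "f (\<rho> *\<^sub>R dirvec (a + \<phi>)) = \<rho> * h (a + \<phi>)"
    using homog \<open>\<rho> > 0\<close> by (simp add: h_def)
  have "K \<ge> 0"
    using K[of 0] by linarith
  have "\<bar>h (a + \<phi>) - h a * cos \<phi> - deriv h a * sin \<phi> - (h a + deriv (deriv h) a) * (1 - cos \<phi>)\<bar>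
          \<le> K * (\<bar>\<phi>\<bar> - sin \<bar>\<phi>\<bar>)"
    using angular_derivatives[OF smooth] unfolding h_def[symmetric]
    by (rule circle_taylor[OF _ _ _ K \<open>\<bar>\<phi>\<bar> \<le> pi\<close>])
  also have "\<dots> \<le> K * (\<bar>\<phi>\<bar>^3 / 6)"
    using diff_sin_le[of "\<bar>\<phi>\<bar>"] \<open>K \<ge> 0\<close> by (intro mult_left_mono) auto
  finally have "\<rho> * \<bar>h (a + \<phi>) - h a * cos \<phi> - deriv h a * sin \<phi> - (h a + deriv (deriv h) a) * (1 - cos \<phi>)\<bar>
      \<le> \<rho> * K * \<bar>\<phi>\<bar>^3 / 6"
    using \<open>\<rho> > 0\<close> by (simp add: mult.assoc)
  moreover have "\<rho> * h (a + \<phi>) - \<rho> * (h a * cos \<phi> + deriv h a * sin \<phi>) - \<rho> * (1 - cos \<phi>) * (h a + deriv (deriv h) a)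
      = \<rho> * (h (a + \<phi>) - h a * cos \<phi> - deriv h a * sin \<phi> - (h a + deriv (deriv h) a) * (1 - cos \<phi>))"
    by (simp add: algebra_simps)
  ultimately show ?thesis
    using \<open>\<rho> > 0\<close> unfolding f L by (simp add: abs_mult)
qed

lemma abs_angular_deriv_le_Cconst:
  fixes \<Phi> :: "real^2 \<Rightarrow> real^2 \<Rightarrow> real"
  assumes "bdd_above ((\<lambda>p. \<bar>(deriv ^^ k) (\<lambda>t. \<Phi> (fst p) (dirvec t)) (snd p)\<bar>)
                        ` (cbox (0::real^2) 1 \<times> (UNIV::real set)))"
    and "x \<in> cbox 0 1"
  shows "2 * pi * \<bar>(deriv ^^ k) (\<lambda>t. \<Phi> x (dirvec t)) t\<bar> \<le> Cconst \<Phi> k"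
  unfolding Cconst_def using assms
  by (intro mult_left_mono cSUP_upper2[where x = "(x, t)"]) auto

lemma Cconst_nonneg:
  fixes \<Phi> :: "real^2 \<Rightarrow> real^2 \<Rightarrow> real"
  assumes "bdd_above ((\<lambda>p. \<bar>(deriv ^^ k) (\<lambda>t. \<Phi> (fst p) (dirvec t)) (snd p)\<bar>)
                        ` (cbox (0::real^2) 1 \<times> (UNIV::real set)))"
  shows "Cconst \<Phi> k \<ge> 0"
  using abs_angular_deriv_le_Cconst[OF assms, of 0 0] by (simp add: mem_box_cart)
    (smt (verit) abs_ge_zero mult_nonneg_nonneg pi_ge_zero)

lemma abs_add_angular_derivs_le_Cconst:
  fixes \<Phi> :: "real^2 \<Rightarrow> real^2 \<Rightarrow> real"
  assumes C: "\<And>k. k \<le> 3 \<Longrightarrow> bdd_above ((\<lambda>p. \<bar>(deriv ^^ k) (\<lambda>t. \<Phi> (fst p) (dirvec t)) (snd p)\<bar>)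
                          ` (cbox (0::real^2) 1 \<times> (UNIV::real set)))"
    and "i \<le> 3" "j \<le> 3" "x \<in> cbox 0 1"
  shows "2 * pi * \<bar>(deriv ^^ i) (\<lambda>t. \<Phi> x (dirvec t)) t + (deriv ^^ j) (\<lambda>t. \<Phi> x (dirvec t)) t\<bar>
           \<le> Cconst \<Phi> i + Cconst \<Phi> j"
proof -
  let ?h = "\<lambda>t. \<Phi> x (dirvec t)"
  have "2 * pi * \<bar>(deriv ^^ i) ?h t + (deriv ^^ j) ?h t\<bar>
          \<le> 2 * pi * \<bar>(deriv ^^ i) ?h t\<bar> + 2 * pi * \<bar>(deriv ^^ j) ?h t\<bar>"
    using mult_left_mono[OF abs_triangle_ineq, of "2 * pi"] by (simp add: distrib_left)
  then show ?thesis
    using abs_angular_deriv_le_Cconst[OF C[OF \<open>i \<le> 3\<close>] \<open>x \<in> cbox 0 1\<close>, of t]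
      abs_angular_deriv_le_Cconst[OF C[OF \<open>j \<le> 3\<close>] \<open>x \<in> cbox 0 1\<close>, of t] by linarith
qed

lemma resid_phase_approx:
  fixes \<Phi> :: "real^2 \<Rightarrow> real^2 \<Rightarrow> real" and x \<xi> :: "real^2" and \<theta> :: real
  defines "h \<equiv> \<lambda>t. \<Phi> x (dirvec t)"
    and "\<delta> \<equiv> arccos ((\<xi> \<bullet> dirvec \<theta>) / norm \<xi>)"
  assumes smooth: "Ck_on 3 (- {0}) (\<Phi> x)"
    and homog: "\<And>y c. y \<noteq> 0 \<Longrightarrow> c > 0 \<Longrightarrow> \<Phi> x (c *\<^sub>R y) = c * \<Phi> x y"
    and C: "\<And>k. k \<le> 3 \<Longrightarrow> bdd_above ((\<lambda>p. \<bar>(deriv ^^ k) (\<lambda>t. \<Phi> (fst p) (dirvec t)) (snd p)\<bar>)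
                          ` (cbox (0::real^2) 1 \<times> (UNIV::real set)))"
    and x: "x \<in> cbox 0 1" and "\<xi> \<noteq> 0"
  shows "\<bar>2 * pi * resid_phase \<Phi> (dirvec \<theta>) x \<xi> - 2 * pi * (h \<theta> + deriv (deriv h) \<theta>) * (norm \<xi> * (1 - cos \<delta>))\<bar>
           \<le> norm \<xi> * (Cconst \<Phi> 1 + Cconst \<Phi> 3) * \<delta>^3 / 6"
proof -
  have "norm (\<xi> /\<^sub>R norm \<xi>) = 1"
    using \<open>\<xi> \<noteq> 0\<close> by simp
  then obtain \<phi> where \<phi>: "\<bar>\<phi>\<bar> \<le> pi" "cos \<phi> = (\<xi> /\<^sub>R norm \<xi>) \<bullet> dirvec \<theta>"
    and \<xi>: "\<xi> /\<^sub>R norm \<xi> = dirvec (\<theta> + \<phi>)"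
    by (rule unit_vector_eq_dirvec_add)
  have "\<delta> = \<bar>\<phi>\<bar>"
    using \<phi> arccos_cos[of "\<bar>\<phi>\<bar>"] by (simp add: \<delta>_def divide_inverse_commute)
  have \<xi>_polar: "\<xi> = norm \<xi> *\<^sub>R dirvec (\<theta> + \<phi>)"
    using \<xi> \<open>\<xi> \<noteq> 0\<close> by (metis divideR_right norm_eq_zero)
  define K where "K = (Cconst \<Phi> 1 + Cconst \<Phi> 3) / (2 * pi)"
  have "\<bar>deriv h t + deriv (deriv (deriv h)) t\<bar> \<le> K" for t
    using abs_add_angular_derivs_le_Cconst[OF C _ _ x, of 1 3 t]
    by (simp add: K_def h_def numeral_3_eq_3 field_simps)
  then have "\<bar>\<Phi> x \<xi> - frechet_derivative (\<Phi> x) (at (dirvec \<theta>)) \<xi>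
               - norm \<xi> * (1 - cos \<phi>) * (h \<theta> + deriv (deriv h) \<theta>)\<bar> \<le> norm \<xi> * K * \<bar>\<phi>\<bar>^3 / 6"
    using linearization_remainder_homogeneous[OF smooth homog, of K "norm \<xi>" \<phi> \<theta>] \<phi>(1) \<open>\<xi> \<noteq> 0\<close>
    unfolding h_def by (simp flip: \<xi>_polar)
  then have "2 * pi * \<bar>resid_phase \<Phi> (dirvec \<theta>) x \<xi> - (h \<theta> + deriv (deriv h) \<theta>) * (norm \<xi> * (1 - cos \<delta>))\<bar>
               \<le> 2 * pi * (norm \<xi> * K * \<delta>^3 / 6)"
    unfolding resid_phase_def \<open>\<delta> = \<bar>\<phi>\<bar>\<close> by (simp add: algebra_simps)
  also have "\<dots> = norm \<xi> * (Cconst \<Phi> 1 + Cconst \<Phi> 3) * \<delta>^3 / 6"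
    unfolding K_def by simp
  also have "2 * pi * \<bar>resid_phase \<Phi> (dirvec \<theta>) x \<xi> - (h \<theta> + deriv (deriv h) \<theta>) * (norm \<xi> * (1 - cos \<delta>))\<bar>
      = \<bar>2 * pi * resid_phase \<Phi> (dirvec \<theta>) x \<xi> - 2 * pi * (h \<theta> + deriv (deriv h) \<theta>) * (norm \<xi> * (1 - cos \<delta>))\<bar>"
  proof -
    have "2 * pi * a - 2 * pi * b * c = 2 * pi * (a - b * c)" for a b c :: real
      by (simp add: algebra_simps)
    then show ?thesis
      by (simp add: abs_mult)
  qed
  finally show ?thesis .
qed

section \<open>Estimates on the wedge\<close>

lemma wedge_norm_sq_le:
  assumes "\<xi> \<in> wedge N \<alpha> u"
  shows "norm \<xi>^2 \<le> real N^2 / 2"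
proof -
  have box: "- real N / 2 \<le> \<xi>$i \<and> \<xi>$i \<le> real N / 2 - 1" for i
    using assms by (simp add: wedge_def mem_box_cart)
  have "\<bar>\<xi>$i\<bar> \<le> real N / 2" for i
    using box[of i] by linarith
  then have "(\<xi>$i)^2 \<le> (real N / 2)^2" for i
    by (simp add: power2_le_iff_abs_le)
  then have "(\<xi>$1)^2 + (\<xi>$2)^2 \<le> (real N / 2)^2 + (real N / 2)^2"
    by (intro add_mono)
  then show ?thesis
    by (simp add: norm_vec_def L2_set_def UNIV_2 power_divide)
qed

lemma wedge_angle_bounds:
  assumes "norm u = 1" "\<xi> \<in> wedge N \<alpha> u"
  shows "0 \<le> arccos ((\<xi> \<bullet> u) / norm \<xi>)" "arccos ((\<xi> \<bullet> u) / norm \<xi>) \<le> \<alpha> / sqrt (real N)"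
proof -
  have "\<xi> \<noteq> 0"
    using assms(2) by (simp add: wedge_def)
  moreover have "\<bar>\<xi> \<bullet> u\<bar> \<le> norm \<xi>"
    using Cauchy_Schwarz_ineq2[of \<xi> u] assms(1) by simp
  ultimately have "\<bar>(\<xi> \<bullet> u) / norm \<xi>\<bar> \<le> 1"
    by (simp add: divide_le_eq_1)
  then show "0 \<le> arccos ((\<xi> \<bullet> u) / norm \<xi>)"
    by (intro arccos_lbound) (auto simp only: abs_le_iff)
  show "arccos ((\<xi> \<bullet> u) / norm \<xi>) \<le> \<alpha> / sqrt (real N)"
    using assms(2) by (simp add: wedge_def)
qed

lemma wedge_cubic_error_le:
  fixes \<rho> D \<delta> \<alpha> \<epsilon> n :: real
  assumes "0 < n" "0 \<le> \<rho>" "\<rho>^2 \<le> n^2 / 2" "0 \<le> D" "\<delta> \<le> \<alpha> / sqrt n" "0 < \<epsilon>"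
    and "\<alpha>^6 * D^2 / (18 * \<epsilon>^2) \<le> n"
  shows "\<rho> * D * \<delta>^3 / 6 \<le> \<epsilon> / 2"
proof -
  have "\<rho> * D * \<delta>^3 / 6 \<le> \<rho> * D * (\<alpha> / sqrt n)^3 / 6"
    using assms by (intro divide_right_mono mult_left_mono power_mono_odd) auto
  also have "\<dots> \<le> \<epsilon> / 2"
  proof (rule power2_le_imp_le)
    have "sqrt n ^ 6 = n ^ 3"
      using power_mult[of "sqrt n" 2 3] \<open>0 < n\<close> by simp
    then have "(\<rho> * D * (\<alpha> / sqrt n)^3 / 6)^2 = \<rho>^2 * D^2 * \<alpha>^6 / (36 * n^3)"
      by (simp add: power_mult_distrib power_divide flip: power_mult)
    also have "\<dots> \<le> (n^2 / 2) * D^2 * \<alpha>^6 / (36 * n^3)"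
      using assms by (intro divide_right_mono mult_right_mono) auto
    also have "\<dots> = \<alpha>^6 * D^2 / (72 * n)"
      using \<open>0 < n\<close> by (simp add: field_simps eval_nat_numeral)
    also have "\<dots> \<le> (\<epsilon> / 2)^2"
      using assms(1,6,7) by (simp add: field_simps power2_eq_square)
    finally show "(\<rho> * D * (\<alpha> / sqrt n)^3 / 6)^2 \<le> (\<epsilon> / 2)^2" .
  qed (use \<open>0 < \<epsilon>\<close> in simp)
  finally show ?thesis .
qed

lemma wedge_product_bound:
  fixes \<rho> D \<delta> \<alpha> n A :: real
  assumes "0 < n" "0 \<le> \<rho>" "\<rho>^2 \<le> n^2 / 2" "0 \<le> \<delta>" "\<delta> \<le> \<alpha> / sqrt n" "\<bar>A\<bar> \<le> D"
  shows "\<bar>A * (\<rho> * (1 - cos \<delta>))\<bar> \<le> D * \<alpha>^2 / (2 * sqrt 2)"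
proof -
  have "\<rho> \<le> n / sqrt 2"
    using assms(1-3) real_sqrt_le_mono[of "\<rho>^2" "n^2 / 2"] by (simp add: real_sqrt_divide)
  have "\<delta>^2 \<le> \<alpha>^2 / n"
    using assms(1,4,5) power_mono[of \<delta> "\<alpha> / sqrt n" 2] by (simp add: power_divide)
  have "0 \<le> \<rho> * (1 - cos \<delta>)"
    using assms(2) by simp
  moreover have "\<rho> * (1 - cos \<delta>) \<le> (n / sqrt 2) * (\<alpha>^2 / n / 2)"
    using \<open>\<rho> \<le> n / sqrt 2\<close> \<open>\<delta>^2 \<le> \<alpha>^2 / n\<close> one_minus_cos_le[of \<delta>] assms(2)
    by (intro mult_mono) auto
  moreover have "(n / sqrt 2) * (\<alpha>^2 / n / 2) = \<alpha>^2 / (2 * sqrt 2)"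
    using \<open>0 < n\<close> by simp
  ultimately have "\<bar>A\<bar> * (\<rho> * (1 - cos \<delta>)) \<le> D * (\<alpha>^2 / (2 * sqrt 2))"
    using assms(6) by (intro mult_mono) auto
  then show ?thesis
    using assms(2) by (simp add: abs_mult)
qed

lemma sep_rank_resid_phase_le:
  fixes N :: nat and \<alpha> \<epsilon> :: real and \<Phi> :: "real^2 \<Rightarrow> real^2 \<Rightarrow> real" and u :: "real^2"
  defines "M \<equiv> (Cconst \<Phi> 0 + Cconst \<Phi> 2) * \<alpha>^2 / (2 * sqrt 2)"
  assumes "N > 0"
    and smooth: "\<And>x. x \<in> cbox (0::real^2) 1 \<Longrightarrow> Ck_on 3 (- {0}) (\<Phi> x)"
    and homog: "\<And>x \<xi> c. x \<in> cbox (0::real^2) 1 \<Longrightarrow> \<xi> \<noteq> 0 \<Longrightarrow> c > 0 \<Longrightarrow>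
        \<Phi> x (c *\<^sub>R \<xi>) = c * \<Phi> x \<xi>"
    and C: "\<And>k. k \<le> 3 \<Longrightarrow> bdd_above ((\<lambda>p. \<bar>(deriv ^^ k) (\<lambda>t. \<Phi> (fst p) (dirvec t)) (snd p)\<bar>)
                          ` (cbox (0::real^2) 1 \<times> (UNIV::real set)))"
    and "norm u = 1" "0 < \<epsilon>"
    and N_large: "real N \<ge> \<alpha>^6 * (Cconst \<Phi> 1 + Cconst \<Phi> 3)^2 / (18 * \<epsilon>^2)"
    and "r \<ge> 1" "M^r / fact r \<le> \<epsilon> / 2"
  shows "sep_rank \<epsilon> (\<lambda>x \<xi>. cis (2 * pi * resid_phase \<Phi> u x \<xi>)) (cbox (0::real^2) 1) (wedge N \<alpha> u) \<le> r"
proof -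
  obtain \<theta> where u: "u = dirvec \<theta>"
    using unit_vector_eq_dirvec_add[OF \<open>norm u = 1\<close>, of 0] by auto
  define h where "h x = (\<lambda>t. \<Phi> x (dirvec t))" for x
  define A where "A x = 2 * pi * (h x \<theta> + deriv (deriv (h x)) \<theta>)" for x
  define \<delta> where "\<delta> \<xi> = arccos ((\<xi> \<bullet> u) / norm \<xi>)" for \<xi>
  define B where "B \<xi> = norm \<xi> * (1 - cos (\<delta> \<xi>))" for \<xi>
  show ?thesis
  proof (rule sep_rank_cis_le_if_product_approx[where a = A and b = B, OF \<open>r \<ge> 1\<close> \<open>M^r / fact r \<le> \<epsilon> / 2\<close>])
    fix x \<xi> :: "real^2" assume x: "x \<in> cbox 0 1" and \<xi>: "\<xi> \<in> wedge N \<alpha> u"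
    have "\<xi> \<noteq> 0"
      using \<xi> by (simp add: wedge_def)
    note \<delta>_bounds = wedge_angle_bounds[OF \<open>norm u = 1\<close> \<xi>, folded \<delta>_def]
    have "\<bar>2 * pi * resid_phase \<Phi> u x \<xi> - A x * B \<xi>\<bar>
            \<le> norm \<xi> * (Cconst \<Phi> 1 + Cconst \<Phi> 3) * \<delta> \<xi>^3 / 6"
      using resid_phase_approx[OF smooth[OF x] homog[OF x] C x \<open>\<xi> \<noteq> 0\<close>, of \<theta>]
      by (simp add: u A_def B_def \<delta>_def h_def mult.assoc)
    also have "\<dots> \<le> \<epsilon> / 2"
      using \<open>N > 0\<close> wedge_norm_sq_le[OF \<xi>] Cconst_nonneg[OF C] \<delta>_bounds \<open>0 < \<epsilon>\<close> N_large
      by (intro wedge_cubic_error_le[where n = "real N" and \<alpha> = \<alpha>]) auto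
    finally show "\<bar>2 * pi * resid_phase \<Phi> u x \<xi> - A x * B \<xi>\<bar> \<le> \<epsilon> / 2" .
    have "\<bar>A x\<bar> \<le> Cconst \<Phi> 0 + Cconst \<Phi> 2"
      using abs_add_angular_derivs_le_Cconst[OF C _ _ x, of 0 2 \<theta>]
      by (simp add: A_def h_def abs_mult numeral_2_eq_2)
    then show "\<bar>A x * B \<xi>\<bar> \<le> M"
      unfolding M_def B_def using \<open>N > 0\<close> wedge_norm_sq_le[OF \<xi>] \<delta>_bounds
      by (intro wedge_product_bound[where n = "real N"]) auto
  qed
qed

section \<open>Choosing the rank\<close>

lemma power_self_le_exp_mult_fact: "real n ^ n \<le> exp (real n) * fact n"
proof -
  have "summable (\<lambda>k. real n ^ k / fact k)"
    using summable_exp[of "real n"] by (simp add: divide_inverse mult.commute)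
  then have "real n ^ n / fact n \<le> (\<Sum>k. real n ^ k / fact k)"
    by (intro sum_le_suminf[where I = "{n}", simplified]) auto
  also have "\<dots> = exp (real n)"
    using exp_converges[of "real n"] by (simp add: sums_iff divide_inverse mult.commute)
  finally show ?thesis
    by (simp add: divide_le_eq mult.commute)
qed

lemma pow_div_fact_le_if_ge_max:
  fixes \<epsilon> M :: real
  assumes "0 < \<epsilon>" "\<epsilon> \<le> 1" "0 \<le> M" and r: "max (2 * exp 1 * M) (log 2 (4 / \<epsilon>)) \<le> real r"
  shows "1 \<le> r" "M^r / fact r \<le> \<epsilon> / 2"
proof -
  have "4 / \<epsilon> = 2 powr (log 2 (4 / \<epsilon>))"
    using \<open>0 < \<epsilon>\<close> by simp
  also have "\<dots> \<le> 2 powr (real r)"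
    using r by (intro powr_mono) auto
  finally have "4 / \<epsilon> \<le> 2 ^ r"
    by (simp add: powr_realpow)
  moreover have "(4::real) \<le> 4 / \<epsilon>"
    using assms(1,2) by (simp add: field_simps)
  ultimately show "1 \<le> r"
    by (cases r) auto
  then have "real r > 0"
    by simp
  have "M^r / fact r \<le> (exp 1 * M / real r)^r"
  proof -
    have "M^r * real r ^ r \<le> M^r * (exp (real r) * fact r)"
      using power_self_le_exp_mult_fact[of r] \<open>0 \<le> M\<close> by (intro mult_left_mono) auto
    then have "M^r * real r ^ r \<le> (exp 1 * M)^r * fact r"
      by (simp add: power_mult_distrib algebra_simps flip: exp_of_nat_mult)
    then show ?thesis
      using \<open>real r > 0\<close> by (simp add: power_divide field_simps)
  qed
  also have "\<dots> \<le> (1 / 2)^r"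
    using r \<open>real r > 0\<close> \<open>0 \<le> M\<close> by (intro power_mono) (auto simp: field_simps)
  also have "\<dots> \<le> \<epsilon> / 4"
    using \<open>4 / \<epsilon> \<le> 2 ^ r\<close> \<open>0 < \<epsilon>\<close> by (simp add: power_one_over field_simps)
  also have "\<dots> \<le> \<epsilon> / 2"
    using \<open>0 < \<epsilon>\<close> by simp
  finally show "M^r / fact r \<le> \<epsilon> / 2" .
qed

lemma pow_div_fact_le_if_ge_log:
  fixes \<epsilon> M :: real
  assumes "0 < \<epsilon>" "\<epsilon> \<le> 1" "0 < M" "exp 1 * M \<le> 1 / 2"
    and r: "ln (4 / \<epsilon>) / ln (1 / (exp 1 * M)) \<le> real r"
  shows "1 \<le> r" "M^r / fact r \<le> \<epsilon> / 2"
proof -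
  define y where "y = 1 / (exp 1 * M)"
  have "2 \<le> y"
    using assms(3,4) by (simp add: y_def field_simps)
  have "0 < ln (4 / \<epsilon>)"
    using assms(1,2) by (simp add: field_simps)
  then have "0 < ln (4 / \<epsilon>) / ln y"
    using \<open>2 \<le> y\<close> by simp
  then show "1 \<le> r"
    using r y_def by simp
  have "ln (4 / \<epsilon>) \<le> real r * ln y"
    using r \<open>2 \<le> y\<close> unfolding y_def[symmetric] by (simp add: divide_le_eq)
  then have "ln (4 / \<epsilon>) \<le> ln (y ^ r)"
    using \<open>2 \<le> y\<close> by (simp add: ln_realpow)
  then have "1 / y ^ r \<le> \<epsilon> / 4"
    using \<open>0 < \<epsilon>\<close> \<open>2 \<le> y\<close> by (simp add: field_simps)
  have "M^r / fact r \<le> M^r"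
    using \<open>0 < M\<close> by (simp add: divide_le_eq mult_le_cancel_left1)
  also have "\<dots> \<le> (exp 1 * M)^r"
    using \<open>0 < M\<close> by (intro power_mono) auto
  also have "\<dots> = 1 / y ^ r"
    by (simp add: y_def power_one_over)
  finally show "M^r / fact r \<le> \<epsilon> / 2"
    using \<open>1 / y ^ r \<le> \<epsilon> / 4\<close> \<open>0 < \<epsilon>\<close> by simp
qed

lemma le_one_plus_if_le_nat_above:
  fixes R x :: real
  assumes "0 \<le> x" "\<And>r::nat. x \<le> real r \<Longrightarrow> R \<le> real r"
  shows "R \<le> 1 + x"
proof -
  have "R \<le> real (nat \<lceil>x\<rceil>)"
    by (rule assms(2)) (rule real_nat_ceiling_ge)
  also have "\<dots> = real_of_int \<lceil>x\<rceil>"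
    using assms(1) by simp
  also have "\<dots> \<le> 1 + x"
    using of_int_ceiling_le_add_one[of x] by linarith
  finally show ?thesis .
qed

lemma rank_bound_max:
  fixes R \<epsilon> M :: real
  assumes "0 < \<epsilon>" "\<epsilon> \<le> 1" "0 \<le> M"
    and rank: "\<And>r. 1 \<le> r \<Longrightarrow> M^r / fact r \<le> \<epsilon> / 2 \<Longrightarrow> R \<le> real r"
  shows "R \<le> 1 + max (2 * exp 1 * M) (log 2 (4 / \<epsilon>))"
proof (rule le_one_plus_if_le_nat_above)
  show "0 \<le> max (2 * exp 1 * M) (log 2 (4 / \<epsilon>))"
    using \<open>0 \<le> M\<close> by (simp add: le_max_iff_disj)
  show "R \<le> real r" if "max (2 * exp 1 * M) (log 2 (4 / \<epsilon>)) \<le> real r" for r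
    using rank pow_div_fact_le_if_ge_max[OF assms(1-3) that] by blast
qed

lemma rank_bound_log:
  fixes R \<epsilon> M :: real
  assumes "0 < \<epsilon>" "\<epsilon> \<le> 1" "0 < M" "exp 1 * M \<le> 1 / 2"
    and rank: "\<And>r. 1 \<le> r \<Longrightarrow> M^r / fact r \<le> \<epsilon> / 2 \<Longrightarrow> R \<le> real r"
  shows "R \<le> 1 + ln (4 / \<epsilon>) / ln (1 / (exp 1 * M))"
proof (rule le_one_plus_if_le_nat_above)
  show "0 \<le> ln (4 / \<epsilon>) / ln (1 / (exp 1 * M))"
    using assms(1-4) by (intro divide_nonneg_nonneg) (simp_all add: field_simps)
  show "R \<le> real r" if "ln (4 / \<epsilon>) / ln (1 / (exp 1 * M)) \<le> real r" for r
    using rank pow_div_fact_le_if_ge_log[OF assms(1-4) that] by blast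
qed

lemma small_aperture_bounds:
  fixes \<alpha> D :: real
  defines "M \<equiv> D * \<alpha>^2 / (2 * sqrt 2)"
  assumes "0 < \<alpha>" "0 \<le> D" "\<alpha> \<le> sqrt (sqrt 2 / (exp 1 * D))"
  shows "0 < M" "exp 1 * M \<le> 1 / 2" "1 / (exp 1 * M) = 2 * sqrt 2 / (exp 1 * \<alpha>^2 * D)"
proof -
  have "D > 0"
    using assms(2-4) by (cases "D = 0") auto
  then have "\<alpha>^2 * (exp 1 * D) \<le> sqrt 2"
    using power_mono[OF assms(4), of 2] assms(2) by (simp add: field_simps)
  then show "0 < M" "exp 1 * M \<le> 1 / 2" "1 / (exp 1 * M) = 2 * sqrt 2 / (exp 1 * \<alpha>^2 * D)"
    using \<open>D > 0\<close> assms(2) by (simp_all add: M_def field_simps)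
qed

theorem theorem1:
  fixes N :: nat and \<alpha> :: real and \<Phi> :: "real^2 \<Rightarrow> real^2 \<Rightarrow> real" and u :: "real^2"
  assumes N_pos: "N > 0" and N_even: "even N"
    and alpha_pos: "\<alpha> > 0"
    and meas: "\<And>\<xi>. \<xi> \<noteq> 0 \<Longrightarrow>
        (\<lambda>x. \<Phi> x \<xi>) \<in> borel_measurable (restrict_space lebesgue (cbox (0::real^2) 1))"
    and smooth: "\<And>x. x \<in> cbox (0::real^2) 1 \<Longrightarrow> Ck_on 3 (- {0}) (\<Phi> x)"
    and homog: "\<And>x \<xi> c. x \<in> cbox (0::real^2) 1 \<Longrightarrow> \<xi> \<noteq> 0 \<Longrightarrow> c > 0 \<Longrightarrow>
        \<Phi> x (c *\<^sub>R \<xi>) = c * \<Phi> x \<xi>"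
    and finite_C: "\<And>k. k \<le> 3 \<Longrightarrow> bdd_above ((\<lambda>p. \<bar>(deriv ^^ k) (\<lambda>t. \<Phi> (fst p) (dirvec t)) (snd p)\<bar>)
                          ` (cbox (0::real^2) 1 \<times> (UNIV::real set)))"
    and u_unit: "norm u = 1"
  shows "\<forall>\<epsilon>::real. 0 < \<epsilon> \<and> \<epsilon> \<le> 1 \<and>
           real N \<ge> \<alpha>^6 * (Cconst \<Phi> 1 + Cconst \<Phi> 3)^2 / (18 * \<epsilon>^2) \<longrightarrow>
           (let r = real (sep_rank \<epsilon> (\<lambda>x \<xi>. cis (2 * pi * resid_phase \<Phi> u x \<xi>))
                                   (cbox (0::real^2) 1) (wedge N \<alpha> u));
                D2 = Cconst \<Phi> 0 + Cconst \<Phi> 2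
            in r \<le> 1 + max (exp 1 * sqrt 2 / 2 * \<alpha>^2 * D2) (log 2 (4 / \<epsilon>)) \<and>
               (\<alpha> \<le> sqrt (sqrt 2 / (exp 1 * D2)) \<longrightarrow>
                  r \<le> 1 + ln (4 / \<epsilon>) / ln (2 * sqrt 2 / (exp 1 * \<alpha>^2 * D2))))"
proof -
  define R where "R \<epsilon> = real (sep_rank \<epsilon> (\<lambda>x \<xi>. cis (2 * pi * resid_phase \<Phi> u x \<xi>))
                                          (cbox (0::real^2) 1) (wedge N \<alpha> u))" for \<epsilon>
  define D2 where "D2 = Cconst \<Phi> 0 + Cconst \<Phi> 2"
  define M where "M = D2 * \<alpha>^2 / (2 * sqrt 2)"
  have "0 \<le> D2"
    using Cconst_nonneg[OF finite_C] by (simp add: D2_def)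
  have rank: "R \<epsilon> \<le> real r"
    if "0 < \<epsilon>" "real N \<ge> \<alpha>^6 * (Cconst \<Phi> 1 + Cconst \<Phi> 3)^2 / (18 * \<epsilon>^2)"
      and "1 \<le> r" "M^r / fact r \<le> \<epsilon> / 2" for \<epsilon> r
    using sep_rank_resid_phase_le[OF N_pos smooth homog finite_C u_unit that(1,2), of r] that(3,4)
    unfolding R_def M_def D2_def by simp
  have "R \<epsilon> \<le> 1 + max (exp 1 * sqrt 2 / 2 * \<alpha>^2 * D2) (log 2 (4 / \<epsilon>))"
    if "0 < \<epsilon>" "\<epsilon> \<le> 1" "real N \<ge> \<alpha>^6 * (Cconst \<Phi> 1 + Cconst \<Phi> 3)^2 / (18 * \<epsilon>^2)" for \<epsilon>
  proof -
    have "0 \<le> M"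
      using \<open>0 \<le> D2\<close> by (simp add: M_def)
    moreover have "2 * exp 1 * M = exp 1 * sqrt 2 / 2 * \<alpha>^2 * D2"
      by (simp add: M_def field_simps)
    ultimately show ?thesis
      using rank_bound_max[OF that(1,2) _ rank[OF that(1,3)]] by metis
  qed
  moreover have "R \<epsilon> \<le> 1 + ln (4 / \<epsilon>) / ln (2 * sqrt 2 / (exp 1 * \<alpha>^2 * D2))"
    if "0 < \<epsilon>" "\<epsilon> \<le> 1" "real N \<ge> \<alpha>^6 * (Cconst \<Phi> 1 + Cconst \<Phi> 3)^2 / (18 * \<epsilon>^2)"
      and "\<alpha> \<le> sqrt (sqrt 2 / (exp 1 * D2))" for \<epsilon>
    using rank_bound_log[OF that(1,2) small_aperture_bounds(1,2)[OF alpha_pos \<open>0 \<le> D2\<close> that(4),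
        folded M_def] rank[OF that(1,3)]]
    unfolding small_aperture_bounds(3)[OF alpha_pos \<open>0 \<le> D2\<close> that(4), folded M_def] .
  ultimately show ?thesis
    unfolding Let_def R_def[symmetric] D2_def[symmetric] by blast
qed

end
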